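(* The ai-semiring $\mathcal{B}_2^1$ lies in the variety of ai-semirings generated by $\mathcal{A}_2^1$, i.e., $\mathcal{B}_2^1$ satisfies every identity (in the signature $+,\cdot$) satisfied by $\mathcal{A}_2^1$.
   Context: An ai-semiring is a structure $(R,+,\cdot)$ with $(R,+)$ a semilattice, $(R,\cdot)$ a semigroup, and multiplication distributing over addition on both sides; in a semilattice, $s\le t$ iff $s+t=t$, and $s+t$ is the supremum. $\mathcal{A}_2^1$: Let $A_2=\langle e,a\mid eae=e^2=e,\ aea=a,\ a^2=0\rangle=\{e,a,ae,ea,0\}$, $A_2^1$ the monoid obtained by adjoining an identity $1$. Represent $A_2^1$ by order-preserving maps of the chain $0<1<2$ fixing $2$ (acting on the right, $x(\alpha\beta)=(x\alpha)\beta$): $1\mapsto$ identity; $ea\mapsto(0\mapsto1,1\mapsto1,2\mapsto2)$; $ae\mapsto(0\mapsto0,1\mapsto2,2\mapsto2)$; $a\mapsto(0\mapsto1,1\mapsto2,2\mapsto2)$; $e\mapsto(0\mapsto0,1\mapsto0,2\mapsto2)$; $0\mapsto$ constant map to $2$. Addition in $\mathcal{A}_2^1$ is pointwise maximum; its order is $e<1<ea<a<0$, $1<ae<a$ with $ea,ae$ incomparable. $\mathcal{B}_2^1$: $B_2=\langle c,d\mid cdc=c,\ dcd=d,\ c^2=d^2=0\rangle=\{c,d,cd,dc,0\}$, $B_2^1$ with identity $1$ adjoined; addition is the join in the order where $0$ is the top, $c,d,cd,dc$ lie directly below $0$, and $1$ lies below $cd$ and $dc$ only. *)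

theory Defs
  imports Main
begin

datatype sterm = Var nat | Plus sterm sterm | Times sterm sterm

fun eval :: "('a \<Rightarrow> 'a \<Rightarrow> 'a) \<Rightarrow> ('a \<Rightarrow> 'a \<Rightarrow> 'a) \<Rightarrow> (nat \<Rightarrow> 'a) \<Rightarrow> sterm \<Rightarrow> 'a" where
  "eval pl tm \<rho> (Var i) = \<rho> i"
| "eval pl tm \<rho> (Plus s t) = pl (eval pl tm \<rho> s) (eval pl tm \<rho> t)"
| "eval pl tm \<rho> (Times s t) = tm (eval pl tm \<rho> s) (eval pl tm \<rho> t)"

definition satisfies :: "('a \<Rightarrow> 'a \<Rightarrow> 'a) \<Rightarrow> ('a \<Rightarrow> 'a \<Rightarrow> 'a) \<Rightarrow> sterm \<Rightarrow> sterm \<Rightarrow> bool" where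
  "satisfies pl tm s t \<longleftrightarrow> (\<forall>\<rho>. eval pl tm \<rho> s = eval pl tm \<rho> t)"

datatype a21 = A1 | Ae | Aa | Aae | Aea | A0

text \<open>Representation by order-preserving maps of the chain 0<1<2 fixing 2,
  given as the triple of images of 0,1,2.\<close>
fun repA :: "a21 \<Rightarrow> nat \<times> nat \<times> nat" where
  "repA A1 = (0, 1, 2)"
| "repA Aea = (1, 1, 2)"
| "repA Aae = (0, 2, 2)"
| "repA Aa = (1, 2, 2)"
| "repA Ae = (0, 0, 2)"
| "repA A0 = (2, 2, 2)"

definition app :: "nat \<times> nat \<times> nat \<Rightarrow> nat \<Rightarrow> nat" where
  "app f x = (if x = 0 then fst f else if x = 1 then fst (snd f) else snd (snd f))"

definition timesA :: "a21 \<Rightarrow> a21 \<Rightarrow> a21" where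
  "timesA \<alpha> \<beta> = (THE \<gamma>. \<forall>x\<in>{0,1,2}. app (repA \<gamma>) x = app (repA \<beta>) (app (repA \<alpha>) x))"

definition plusA :: "a21 \<Rightarrow> a21 \<Rightarrow> a21" where
  "plusA \<alpha> \<beta> = (THE \<gamma>. \<forall>x\<in>{0,1,2}. app (repA \<gamma>) x = max (app (repA \<alpha>) x) (app (repA \<beta>) x))"

datatype b21 = B1 | Bc | Bd | Bcd | Bdc | B0

text \<open>Multiplication of B_2 = <c,d | cdc=c, dcd=d, c^2=d^2=0> with identity adjoined.\<close>
fun timesB :: "b21 \<Rightarrow> b21 \<Rightarrow> b21" where
  "timesB B1 y = y"
| "timesB x B1 = x"
| "timesB B0 y = B0"
| "timesB x B0 = B0"
| "timesB Bc Bc = B0"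
| "timesB Bc Bd = Bcd"
| "timesB Bc Bcd = B0"
| "timesB Bc Bdc = Bc"
| "timesB Bd Bc = Bdc"
| "timesB Bd Bd = B0"
| "timesB Bd Bcd = Bd"
| "timesB Bd Bdc = B0"
| "timesB Bcd Bc = Bc"
| "timesB Bcd Bd = B0"
| "timesB Bcd Bcd = Bcd"
| "timesB Bcd Bdc = B0"
| "timesB Bdc Bc = B0"
| "timesB Bdc Bd = Bd"
| "timesB Bdc Bcd = B0"
| "timesB Bdc Bdc = Bdc"

definition leB :: "b21 \<Rightarrow> b21 \<Rightarrow> bool" where
  "leB x y \<longleftrightarrow> x = y \<or> y = B0 \<or> (x = B1 \<and> (y = Bcd \<or> y = Bdc))"

definition plusB :: "b21 \<Rightarrow> b21 \<Rightarrow> b21" where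
  "plusB x y = (THE z. leB x z \<and> leB y z \<and> (\<forall>w. leB x w \<and> leB y w \<longrightarrow> leB z w))"

end

theory Submission
  imports Defs
begin

text \<open>
  \<open>B\<^sub>2\<^sup>1\<close> is a homomorphic image of a subalgebra of \<open>A\<^sub>2\<^sup>1 \<times> A\<^sub>2\<^sup>1\<close>,
  namely of the 23 pairs listed in \<open>S21\<close>: the pairs \<open>(1,1)\<close>, \<open>(a,e)\<close>, \<open>(e,a)\<close>,
  \<open>(ae,ea)\<close>, \<open>(ea,ae)\<close> are sent to \<open>1, c, d, cd, dc\<close>, and the remaining 18 pairs,
  which form the upset generated by \<open>(a,1)\<close>, \<open>(1,a)\<close>, \<open>(0,e)\<close>, \<open>(e,0)\<close>, are
  collapsed to \<open>0\<close>. Identities are preserved by products, subalgebras and homomorphic images.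
\<close>

definition prod_op :: "('a \<Rightarrow> 'a \<Rightarrow> 'a) \<Rightarrow> ('b \<Rightarrow> 'b \<Rightarrow> 'b) \<Rightarrow> 'a \<times> 'b \<Rightarrow> 'a \<times> 'b \<Rightarrow> 'a \<times> 'b" where
  "prod_op f g p q = (f (fst p) (fst q), g (snd p) (snd q))"

lemma eval_prod_op:
  "eval (prod_op pl1 pl2) (prod_op tm1 tm2) \<rho> t = (eval pl1 tm1 (fst \<circ> \<rho>) t, eval pl2 tm2 (snd \<circ> \<rho>) t)"
  by (induction t) (simp_all add: prod_op_def)

lemma satisfies_prod_op:
  assumes "satisfies pl1 tm1 s t" and "satisfies pl2 tm2 s t"
  shows "satisfies (prod_op pl1 pl2) (prod_op tm1 tm2) s t"
  using assms by (simp add: satisfies_def eval_prod_op)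

definition subalgebra :: "('a \<Rightarrow> 'a \<Rightarrow> 'a) \<Rightarrow> ('a \<Rightarrow> 'a \<Rightarrow> 'a) \<Rightarrow> 'a set \<Rightarrow> bool" where
  "subalgebra pl tm S \<longleftrightarrow> (\<forall>x\<in>S. \<forall>y\<in>S. pl x y \<in> S \<and> tm x y \<in> S)"

definition hom_on :: "'a set \<Rightarrow> ('a \<Rightarrow> 'a \<Rightarrow> 'a) \<Rightarrow> ('a \<Rightarrow> 'a \<Rightarrow> 'a) \<Rightarrow>
    ('b \<Rightarrow> 'b \<Rightarrow> 'b) \<Rightarrow> ('b \<Rightarrow> 'b \<Rightarrow> 'b) \<Rightarrow> ('a \<Rightarrow> 'b) \<Rightarrow> bool" where
  "hom_on S pl tm pl' tm' h \<longleftrightarrow>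
     (\<forall>x\<in>S. \<forall>y\<in>S. h (pl x y) = pl' (h x) (h y) \<and> h (tm x y) = tm' (h x) (h y))"

lemma eval_hom_on:
  assumes "subalgebra pl tm S" and "hom_on S pl tm pl' tm' h" and "range \<rho> \<subseteq> S"
  shows "eval pl tm \<rho> t \<in> S \<and> h (eval pl tm \<rho> t) = eval pl' tm' (h \<circ> \<rho>) t"
  using assms by (induction t) (auto simp: subalgebra_def hom_on_def)

lemma satisfies_hom_image:
  assumes sub: "subalgebra pl tm S" and hom: "hom_on S pl tm pl' tm' h" and surj: "h ` S = UNIV"
    and st: "satisfies pl tm s t"
  shows "satisfies pl' tm' s t"
  unfolding satisfies_def
proof
  fix \<sigma> :: "nat \<Rightarrow> _"
  define \<rho> where "\<rho> = inv_into S h \<circ> \<sigma>"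
  have "range \<rho> \<subseteq> S" and h\<rho>: "h \<circ> \<rho> = \<sigma>"
    using surj by (auto simp: \<rho>_def inv_into_into f_inv_into_f)
  note eval_hom = eval_hom_on[OF sub hom this(1), unfolded h\<rho>]
  have "eval pl' tm' \<sigma> s = h (eval pl tm \<rho> s)"
    using eval_hom by simp
  also have "\<dots> = h (eval pl tm \<rho> t)"
    using st by (simp add: satisfies_def)
  also have "\<dots> = eval pl' tm' \<sigma> t"
    using eval_hom by simp
  finally show "eval pl' tm' \<sigma> s = eval pl' tm' \<sigma> t" .
qed

definition rcomp :: "nat \<times> nat \<times> nat \<Rightarrow> nat \<times> nat \<times> nat \<Rightarrow> nat \<times> nat \<times> nat" where
  "rcomp f g = (app g (app f 0), app g (app f 1), app g (app f 2))"

definition max_map :: "nat \<times> nat \<times> nat \<Rightarrow> nat \<times> nat \<times> nat \<Rightarrow> nat \<times> nat \<times> nat" where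
  "max_map f g = (max (app f 0) (app g 0), max (app f 1) (app g 1), max (app f 2) (app g 2))"

definition a21_of :: "nat \<times> nat \<times> nat \<Rightarrow> a21" where
  "a21_of f =
    (if f = repA A1 then A1 else if f = repA Ae then Ae else if f = repA Aa then Aa
     else if f = repA Aae then Aae else if f = repA Aea then Aea else A0)"

lemma The_repA_eq:
  assumes "\<forall>x\<in>{0,1,2}. app (repA \<gamma>) x = F x"
  shows "(THE \<gamma>. \<forall>x\<in>{0,1,2}. app (repA \<gamma>) x = F x) = \<gamma>"
proof (rule the_equality)
  show "\<delta> = \<gamma>" if "\<forall>x\<in>{0,1,2}. app (repA \<delta>) x = F x" for \<delta>
    using that assms by (cases \<gamma>; cases \<delta>; simp add: app_def)
qed (fact assms)

lemma timesA_eq: "timesA \<alpha> \<beta> = a21_of (rcomp (repA \<alpha>) (repA \<beta>))"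
  unfolding timesA_def
  by (rule The_repA_eq) (cases \<alpha>; cases \<beta>; simp add: a21_of_def rcomp_def app_def)

lemma plusA_eq: "plusA \<alpha> \<beta> = a21_of (max_map (repA \<alpha>) (repA \<beta>))"
  unfolding plusA_def
  by (rule The_repA_eq) (cases \<alpha>; cases \<beta>; simp add: a21_of_def max_map_def app_def)

lemma plusB_eq: "plusB x y = (if leB x y then y else if leB y x then x else B0)"
  unfolding plusB_def
  by (rule the_equality; cases x; cases y) (auto simp: leB_def)

fun b21_of_pair :: "a21 \<times> a21 \<Rightarrow> b21" where
  "b21_of_pair (A1, A1) = B1"
| "b21_of_pair (Aa, Ae) = Bc"
| "b21_of_pair (Ae, Aa) = Bd"
| "b21_of_pair (Aae, Aea) = Bcd"
| "b21_of_pair (Aea, Aae) = Bdc"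
| "b21_of_pair _ = B0"

definition S21 :: "(a21 \<times> a21) set" where
  "S21 = {(A1, A1), (Aa, Ae), (Ae, Aa), (Aae, Aea), (Aea, Aae),
          (Aa, A1), (Aa, Aea), (Aa, Aae), (Aa, Aa), (Aa, A0),
          (A1, Aa), (Aea, Aa), (Aae, Aa), (A0, Aa),
          (A0, A1), (A0, Ae), (A0, Aea), (A0, Aae), (A0, A0),
          (A1, A0), (Ae, A0), (Aea, A0), (Aae, A0)}"

text \<open>The quantifiers over \<open>S21\<close> are expanded before simplification: otherwise the
  simplifier unfolds \<open>a21_of\<close> on symbolic arguments and the case split explodes.\<close>

lemma subalgebra_S21: "subalgebra (prod_op plusA plusA) (prod_op timesA timesA) S21"
  unfolding subalgebra_def S21_def ball_simps prod_op_def fst_conv snd_conv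
  by (simp add: timesA_eq plusA_eq a21_of_def rcomp_def max_map_def app_def)

lemma hom_on_b21_of_pair:
  "hom_on S21 (prod_op plusA plusA) (prod_op timesA timesA) plusB timesB b21_of_pair"
  unfolding hom_on_def S21_def ball_simps prod_op_def fst_conv snd_conv
  by (simp add: timesA_eq plusA_eq plusB_eq leB_def a21_of_def rcomp_def max_map_def app_def)

lemma b21_of_pair_image: "b21_of_pair ` S21 = UNIV"
proof -
  have "b \<in> b21_of_pair ` S21" for b
    by (cases b) (force simp: S21_def)+
  then show ?thesis by blast
qed

theorem corollary3p3:
  shows "\<forall>s t. satisfies plusA timesA s t \<longrightarrow> satisfies plusB timesB s t"
proof (intro allI impI)
  fix s t
  assume "satisfies plusA timesA s t"
  then have "satisfies (prod_op plusA plusA) (prod_op timesA timesA) s t"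
    using satisfies_prod_op by blast
  then show "satisfies plusB timesB s t"
    by (rule satisfies_hom_image[OF subalgebra_S21 hom_on_b21_of_pair b21_of_pair_image])
qed

end
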